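(* Let $d\ge2$, $p\ge1$, $k\ge1$. Define $\psi:\mathcal{C}_k^{(d)}\to\mathbb{R}$ by $$\psi:=\frac{1}{dk+1}\sum_{j\ge p}\ \sum_{v\in\{1,\dots,d\}^j}\ \sum_{\substack{\mathcal{S}=\mathrm{Sh}(T;v_0,\dots,v_p=v)\\\text{for some }T\in\mathcal{C}_k^{(d)}}}\mathbf{1}_{\mathcal{S}},$$ where for each code $v$ the inner sum is over the distinct sets $\mathcal{S}$ arising as shuffle classes of the path of length $p$ ending at the vertex with code $v$ in some tree $T\in\mathcal{C}_k^{(d)}$ containing $v$. Then $\psi$ lies in the span of the length-$p$ shuffle indicators, and $$\sup_{T\in\mathcal{C}_k^{(d)}}|\psi(T)-1|\le\frac{C_{d,p}}{dk+1},\qquad C_{d,p}:=\frac{d^p-1}{d-1}.$$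
   Context: A $d$-Catalan tree is a rooted planar tree in which each vertex has $0$ or $d$ children; $\mathcal{C}_k^{(d)}$ is the set of those with $k$ internal vertices (so $dk+1$ vertices). Vertices are coded by words in $\bigcup_{j\ge0}\{1,\dots,d\}^j$: the root is the empty word and the children of the vertex with code $u$ are $u1,\dots,ud$ from left to right; the code length is the height. For a path $(v_0,\dots,v_p)$ ($v_i$ a child of $v_{i-1}$) in $T$, $\mathrm{Sh}(T;v_0,\dots,v_p)$ is the set of trees in $\mathcal{C}_k^{(d)}$ obtained by rearranging the $(d-1)p$ subtrees subtended by the siblings of $v_1,\dots,v_p$ among those positions; these are the length-$p$ shuffle classes, with indicators $\mathbf{1}_{\mathcal{S}}$. *)

theory Defs
  imports Complex_Main "HOL-Library.Sublist" "HOL-Library.Indicator_Function"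
begin

(* Trees are encoded as sets of vertex codes: words over {1..d} (nat lists). *)

definition is_catalan_tree :: "nat \<Rightarrow> nat list set \<Rightarrow> bool" where
  "is_catalan_tree d T \<longleftrightarrow>
     finite T \<and> [] \<in> T \<and>
     (\<forall>u\<in>T. set u \<subseteq> {1..d}) \<and>
     (\<forall>u c. u @ [c] \<in> T \<longrightarrow> u \<in> T) \<and>
     (\<forall>u\<in>T. (\<forall>c\<in>{1..d}. u @ [c] \<in> T) \<or> (\<forall>c\<in>{1..d}. u @ [c] \<notin> T))"

definition internal_vertices :: "nat list set \<Rightarrow> nat list set" where
  "internal_vertices T = {u \<in> T. \<exists>c. u @ [c] \<in> T}"

definition catalan_trees :: "nat \<Rightarrow> nat \<Rightarrow> nat list set set" where
  "catalan_trees d k = {T. is_catalan_tree d T \<and> card (internal_vertices T) = k}"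

definition subtree_at :: "nat list set \<Rightarrow> nat list \<Rightarrow> nat list set" where
  "subtree_at T u = {w. u @ w \<in> T}"

(* positions of the siblings of v_1,...,v_p, where v_p = v and v_0 is the
   ancestor of v at height |v| - p *)
definition sibling_positions :: "nat \<Rightarrow> nat list \<Rightarrow> nat \<Rightarrow> nat list set" where
  "sibling_positions d v p =
     {take i v @ [c] | i c. length v - p \<le> i \<and> i < length v \<and> c \<in> {1..d} \<and> c \<noteq> v ! i}"

(* Sh(T; v_0,...,v_p = v): trees in C_k^(d) obtained by rearranging the
   subtrees hanging at the sibling positions among those positions *)
definition shuffle_class :: "nat \<Rightarrow> nat \<Rightarrow> nat list set \<Rightarrow> nat list \<Rightarrow> nat \<Rightarrow> nat list set set" where
  "shuffle_class d k T v p =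
     {T' \<in> catalan_trees d k.
        \<exists>\<sigma>. bij_betw \<sigma> (sibling_positions d v p) (sibling_positions d v p) \<and>
            (\<forall>s\<in>sibling_positions d v p. subtree_at T' (\<sigma> s) = subtree_at T s) \<and>
            (\<forall>w. (\<forall>s\<in>sibling_positions d v p. \<not> prefix s w) \<longrightarrow> (w \<in> T' \<longleftrightarrow> w \<in> T))}"

definition shuffle_classes :: "nat \<Rightarrow> nat \<Rightarrow> nat \<Rightarrow> nat list set set set" where
  "shuffle_classes d k p =
     {shuffle_class d k T v p | T v. T \<in> catalan_trees d k \<and> v \<in> T \<and> p \<le> length v}"

(* psi; codes v of length >= p not occurring in any tree of C_k^(d) contribute
   an empty inner sum, so the outer sum is restricted to codes that occur *)
definition psi :: "nat \<Rightarrow> nat \<Rightarrow> nat \<Rightarrow> nat list set \<Rightarrow> real" where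
  "psi d k p T = (1 / real (d * k + 1)) *
     (\<Sum>v \<in> {v. p \<le> length v \<and> set v \<subseteq> {1..d} \<and> (\<exists>T'\<in>catalan_trees d k. v \<in> T')}.
        \<Sum>S \<in> {shuffle_class d k T' v p | T'. T' \<in> catalan_trees d k \<and> v \<in> T'}.
          indicator S T)"

end

theory Submission
  imports Defs
begin

(* For a fixed code v, lying in the same length-p shuffle class is an equivalence relation on
   the trees containing v: the sibling positions of the path are never prefixes of v, so
   rearranging the subtrees hanging there keeps v in the tree. Hence the inner sum of psi at T
   counts exactly the one class of T when v \<in> T, and psi T is the proportion of the d k + 1
   vertices of T at height at least p. The remaining vertices have height below p, and there
   are at most 1 + d + ... + d^(p-1) = (d^p - 1)/(d - 1) codes of such heights. *)

lemma catalan_tree_prefix_closed: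
  assumes "is_catalan_tree d T" "u @ w \<in> T"
  shows "u \<in> T"
  using assms(2)
proof (induction w rule: rev_induct)
  case (snoc c w)
  then show ?case using assms(1) unfolding is_catalan_tree_def by (metis append_assoc)
qed simp

lemma catalan_tree_take_mem: "is_catalan_tree d T \<Longrightarrow> u \<in> T \<Longrightarrow> take i u \<in> T"
  using catalan_tree_prefix_closed[of d T "take i u" "drop i u"] by simp

lemma finite_internal_vertices: "is_catalan_tree d T \<Longrightarrow> finite (internal_vertices T)"
  unfolding is_catalan_tree_def internal_vertices_def by simp

lemma catalan_tree_length_le:
  assumes T: "is_catalan_tree d T" and u: "u \<in> T"
  shows "length u \<le> card (internal_vertices T)"
proof -
  have "inj_on (\<lambda>i. take i u) {..<length u}"
    by (rule inj_onI) (metis length_take lessThan_iff min.absorb4)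
  moreover have "(\<lambda>i. take i u) ` {..<length u} \<subseteq> internal_vertices T"
  proof clarify
    fix i assume "i < length u"
    then have "take i u @ [u ! i] \<in> T"
      using catalan_tree_take_mem[OF T u, of "Suc i"] by (simp add: take_Suc_conv_app_nth)
    then show "take i u \<in> internal_vertices T"
      using catalan_tree_prefix_closed[OF T] unfolding internal_vertices_def by blast
  qed
  ultimately have "card {..<length u} \<le> card (internal_vertices T)"
    using card_inj_on_le finite_internal_vertices[OF T] by blast
  then show ?thesis by simp
qed

lemma finite_catalan_trees: "finite (catalan_trees d k)"
proof (rule finite_subset)
  show "catalan_trees d k \<subseteq> Pow {xs. set xs \<subseteq> {1..d} \<and> length xs \<le> k}"
  proof clarify
    fix T u assume "T \<in> catalan_trees d k" "u \<in> T"
    then show "set u \<subseteq> {1..d} \<and> length u \<le> k"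
      using catalan_tree_length_le[of d T u] unfolding catalan_trees_def is_catalan_tree_def by auto
  qed
qed (simp add: finite_lists_length_le)

lemma card_catalan_tree:
  assumes T: "is_catalan_tree d T"
  shows "card T = d * card (internal_vertices T) + 1"
proof -
  let ?I = "internal_vertices T"
  let ?child = "\<lambda>(u, c). u @ [c :: nat]"
  have tree_eq: "T = insert [] (?child ` (?I \<times> {1..d}))"
  proof (intro set_eqI iffI)
    fix w assume w: "w \<in> T"
    show "w \<in> insert [] (?child ` (?I \<times> {1..d}))"
    proof (cases w rule: rev_cases)
      case (snoc u c)
      have "u \<in> ?I"
        using w snoc catalan_tree_prefix_closed[OF T] unfolding internal_vertices_def by blast
      moreover have "c \<in> {1..d}"
        using w snoc T unfolding is_catalan_tree_def by auto
      ultimately show ?thesis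
        using snoc by (intro insertI2 image_eqI[where x="(u, c)"]) auto
    qed simp
  next
    fix w assume "w \<in> insert [] (?child ` (?I \<times> {1..d}))"
    then consider "w = []" | u c c' where "w = u @ [c]" "c \<in> {1..d}" "u \<in> T" "u @ [c'] \<in> T"
      unfolding internal_vertices_def by auto
    then show "w \<in> T"
    proof cases
      case 1
      then show ?thesis using T unfolding is_catalan_tree_def by simp
    next
      case 2
      have "set (u @ [c']) \<subseteq> {1..d}"
        using T 2(4) unfolding is_catalan_tree_def by blast
      moreover have "(\<forall>c\<in>{1..d}. u @ [c] \<in> T) \<or> (\<forall>c\<in>{1..d}. u @ [c] \<notin> T)"
        using T 2(3) unfolding is_catalan_tree_def by blast
      ultimately show ?thesis using 2 by auto
    qed
  qed
  have "inj_on ?child (?I \<times> {1..d})"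
    by (rule inj_onI) auto
  then have "card (?child ` (?I \<times> {1..d})) = card ?I * d"
    by (simp add: card_image card_cartesian_product)
  moreover have "[] \<notin> ?child ` (?I \<times> {1..d})"
    by auto
  ultimately show ?thesis
    using finite_internal_vertices[OF T] by (subst tree_eq) simp
qed

lemma card_catalan_trees: "T \<in> catalan_trees d k \<Longrightarrow> card T = d * k + 1"
  using card_catalan_tree[of d T] by (simp add: catalan_trees_def)

definition rearranges :: "nat list set \<Rightarrow> nat list set \<Rightarrow> nat list set \<Rightarrow> bool" where
  "rearranges P T T' \<longleftrightarrow>
     (\<exists>\<sigma>. bij_betw \<sigma> P P \<and> (\<forall>s\<in>P. subtree_at T' (\<sigma> s) = subtree_at T s) \<and>
         (\<forall>w. (\<forall>s\<in>P. \<not> prefix s w) \<longrightarrow> (w \<in> T' \<longleftrightarrow> w \<in> T)))"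

lemma rearranges_refl: "rearranges P T T"
  unfolding rearranges_def by (rule exI[of _ id]) auto

lemma rearranges_sym:
  assumes "rearranges P T T'"
  shows "rearranges P T' T"
proof -
  obtain \<sigma> where \<sigma>: "bij_betw \<sigma> P P" "\<forall>s\<in>P. subtree_at T' (\<sigma> s) = subtree_at T s"
    and outside: "\<forall>w. (\<forall>s\<in>P. \<not> prefix s w) \<longrightarrow> (w \<in> T' \<longleftrightarrow> w \<in> T)"
    using assms unfolding rearranges_def by blast
  have "bij_betw (inv_into P \<sigma>) P P"
    using \<sigma>(1) by (rule bij_betw_inv_into)
  moreover have "subtree_at T (inv_into P \<sigma> s) = subtree_at T' s" if "s \<in> P" for s
  proof -
    have "inv_into P \<sigma> s \<in> P"
      using bij_betwE[OF calculation] that by blast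
    then have "subtree_at T' (\<sigma> (inv_into P \<sigma> s)) = subtree_at T (inv_into P \<sigma> s)"
      using \<sigma>(2) by blast
    then show ?thesis
      using bij_betw_inv_into_right[OF \<sigma>(1) that] by simp
  qed
  ultimately show ?thesis
    using outside unfolding rearranges_def by blast
qed

lemma rearranges_trans:
  assumes "rearranges P T T'" "rearranges P T' T''"
  shows "rearranges P T T''"
proof -
  obtain \<sigma> where \<sigma>: "bij_betw \<sigma> P P" "\<forall>s\<in>P. subtree_at T' (\<sigma> s) = subtree_at T s"
    "\<forall>w. (\<forall>s\<in>P. \<not> prefix s w) \<longrightarrow> (w \<in> T' \<longleftrightarrow> w \<in> T)"
    using assms(1) unfolding rearranges_def by blast
  obtain \<tau> where \<tau>: "bij_betw \<tau> P P" "\<forall>s\<in>P. subtree_at T'' (\<tau> s) = subtree_at T' s"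
    "\<forall>w. (\<forall>s\<in>P. \<not> prefix s w) \<longrightarrow> (w \<in> T'' \<longleftrightarrow> w \<in> T')"
    using assms(2) unfolding rearranges_def by blast
  have "bij_betw (\<tau> \<circ> \<sigma>) P P"
    using \<sigma>(1) \<tau>(1) by (rule bij_betw_trans)
  moreover have "subtree_at T'' ((\<tau> \<circ> \<sigma>) s) = subtree_at T s" if "s \<in> P" for s
    using \<sigma>(2) \<tau>(2) bij_betwE[OF \<sigma>(1)] that by simp
  ultimately show ?thesis
    using \<sigma>(3) \<tau>(3) unfolding rearranges_def by blast
qed

lemma shuffle_class_eq:
  "shuffle_class d k T v p = {T' \<in> catalan_trees d k. rearranges (sibling_positions d v p) T T'}"
  unfolding shuffle_class_def rearranges_def by simp

lemma shuffle_class_self: "T \<in> catalan_trees d k \<Longrightarrow> T \<in> shuffle_class d k T v p"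
  by (simp add: shuffle_class_eq rearranges_refl)

lemma shuffle_class_eqI:
  assumes "T \<in> shuffle_class d k T' v p"
  shows "shuffle_class d k T v p = shuffle_class d k T' v p"
  using assms rearranges_sym rearranges_trans unfolding shuffle_class_eq by blast

lemma sibling_position_not_prefix:
  assumes "s \<in> sibling_positions d v p"
  shows "\<not> prefix s v"
proof
  assume "prefix s v"
  then obtain z where v: "v = s @ z"
    by (auto simp: prefix_def)
  obtain i c where s: "s = take i v @ [c]" "i < length v" "c \<noteq> v ! i"
    using assms unfolding sibling_positions_def by auto
  have "v ! i = c"
    using s(1,2) by (subst v) (simp add: nth_append)
  with s(3) show False by simp
qed

lemma shuffle_class_preserves_code:
  assumes "T \<in> shuffle_class d k T' v p" "v \<in> T'"
  shows "v \<in> T"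
proof -
  have "\<forall>w. (\<forall>s\<in>sibling_positions d v p. \<not> prefix s w) \<longrightarrow> (w \<in> T \<longleftrightarrow> w \<in> T')"
    using assms(1) unfolding shuffle_class_def by blast
  then show ?thesis
    using assms(2) sibling_position_not_prefix by simp
qed

definition shuffle_classes_at :: "nat \<Rightarrow> nat \<Rightarrow> nat list \<Rightarrow> nat \<Rightarrow> nat list set set set" where
  "shuffle_classes_at d k v p =
     {shuffle_class d k T' v p | T'. T' \<in> catalan_trees d k \<and> v \<in> T'}"

lemma finite_shuffle_classes_at: "finite (shuffle_classes_at d k v p)"
proof (rule finite_subset)
  show "shuffle_classes_at d k v p \<subseteq> (\<lambda>T. shuffle_class d k T v p) ` catalan_trees d k"
    unfolding shuffle_classes_at_def by auto
qed (simp add: finite_catalan_trees)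

lemma shuffle_classes_at_containing:
  assumes T: "T \<in> catalan_trees d k"
  shows "shuffle_classes_at d k v p \<inter> {S. T \<in> S} =
           (if v \<in> T then {shuffle_class d k T v p} else {})"
proof (cases "v \<in> T")
  case True
  have "S = shuffle_class d k T v p" if S: "S \<in> shuffle_classes_at d k v p" and "T \<in> S" for S
  proof -
    obtain T' where "S = shuffle_class d k T' v p"
      using S unfolding shuffle_classes_at_def by auto
    with \<open>T \<in> S\<close> show ?thesis
      using shuffle_class_eqI[of T d k T' v p] by simp
  qed
  moreover have "shuffle_class d k T v p \<in> shuffle_classes_at d k v p"
    using T True unfolding shuffle_classes_at_def by auto
  ultimately have "shuffle_classes_at d k v p \<inter> {S. T \<in> S} = {shuffle_class d k T v p}"
    using shuffle_class_self[OF T] by blast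
  with True show ?thesis by simp
next
  case False
  have "T \<notin> S" if "S \<in> shuffle_classes_at d k v p" for S
    using that False shuffle_class_preserves_code unfolding shuffle_classes_at_def by auto
  then show ?thesis
    using False by auto
qed

lemma sum_indicator_shuffle_classes_at:
  assumes "T \<in> catalan_trees d k"
  shows "(\<Sum>S\<in>shuffle_classes_at d k v p. indicator S T) = (of_bool (v \<in> T) :: real)"
proof -
  have "(\<Sum>S\<in>shuffle_classes_at d k v p. indicator S T) =
          real (card (shuffle_classes_at d k v p \<inter> {S. T \<in> S}))"
    by (simp add: indicator_def finite_shuffle_classes_at)
  then show ?thesis
    using shuffle_classes_at_containing[OF assms] by simp
qed

definition occurring_codes :: "nat \<Rightarrow> nat \<Rightarrow> nat \<Rightarrow> nat list set" where
  "occurring_codes d k p = {v. p \<le> length v \<and> set v \<subseteq> {1..d} \<and> (\<exists>T\<in>catalan_trees d k. v \<in> T)}"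

lemma finite_occurring_codes: "finite (occurring_codes d k p)"
proof (rule finite_subset)
  show "occurring_codes d k p \<subseteq> {xs. set xs \<subseteq> {1..d} \<and> length xs \<le> k}"
    unfolding occurring_codes_def catalan_trees_def using catalan_tree_length_le by fastforce
qed (simp add: finite_lists_length_le)

lemma psi_eq_sum_shuffle_classes_at:
  "psi d k p T =
     (\<Sum>v\<in>occurring_codes d k p. \<Sum>S\<in>shuffle_classes_at d k v p. indicator S T) / real (d * k + 1)"
  unfolding psi_def occurring_codes_def shuffle_classes_at_def by simp

lemma psi_eq_card_deep_vertices:
  assumes T: "T \<in> catalan_trees d k"
  shows "psi d k p T = card {v \<in> T. p \<le> length v} / real (d * k + 1)"
proof -
  have "occurring_codes d k p \<inter> {v. v \<in> T} = {v \<in> T. p \<le> length v}"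
    using T unfolding occurring_codes_def catalan_trees_def is_catalan_tree_def by auto
  then show ?thesis
    by (simp add: psi_eq_sum_shuffle_classes_at sum_indicator_shuffle_classes_at[OF T]
        finite_occurring_codes)
qed

lemma sum_sum_eq_sum_card_mult:
  fixes g :: "'b \<Rightarrow> 'c::comm_semiring_1"
  assumes V: "finite V" and U: "finite U" and F: "\<And>v. v \<in> V \<Longrightarrow> F v \<subseteq> U"
  shows "(\<Sum>v\<in>V. \<Sum>x\<in>F v. g x) = (\<Sum>x\<in>U. of_nat (card {v \<in> V. x \<in> F v}) * g x)"
proof -
  have "(\<Sum>v\<in>V. \<Sum>x\<in>F v. g x) = (\<Sum>v\<in>V. \<Sum>x\<in>{x \<in> U. x \<in> F v}. g x)"
    using F by (intro sum.cong refl) auto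
  also have "\<dots> = (\<Sum>x\<in>U. \<Sum>v\<in>{v \<in> V. x \<in> F v}. g x)"
    by (rule sum.swap_restrict[OF V U])
  finally show ?thesis
    by simp
qed

lemma finite_shuffle_classes: "finite (shuffle_classes d k p)"
proof (rule finite_subset)
  show "shuffle_classes d k p \<subseteq> Pow (catalan_trees d k)"
    unfolding shuffle_classes_def shuffle_class_def by auto
qed (simp add: finite_catalan_trees)

lemma psi_in_span_shuffle_classes:
  "\<exists>c. \<forall>T. psi d k p T = (\<Sum>S\<in>shuffle_classes d k p. c S * indicator S T)"
proof -
  let ?c = "\<lambda>S. card {v \<in> occurring_codes d k p. S \<in> shuffle_classes_at d k v p} / real (d * k + 1)"
  have "shuffle_classes_at d k v p \<subseteq> shuffle_classes d k p" if "v \<in> occurring_codes d k p" for v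
    using that unfolding shuffle_classes_at_def occurring_codes_def shuffle_classes_def by blast
  then have "psi d k p T = (\<Sum>S\<in>shuffle_classes d k p.
                real (card {v \<in> occurring_codes d k p. S \<in> shuffle_classes_at d k v p}) * indicator S T)
              / real (d * k + 1)" for T
    unfolding psi_eq_sum_shuffle_classes_at
    by (simp add: sum_sum_eq_sum_card_mult[OF finite_occurring_codes finite_shuffle_classes])
  then have "psi d k p T = (\<Sum>S\<in>shuffle_classes d k p. ?c S * indicator S T)" for T
    by (simp add: sum_divide_distrib)
  then show ?thesis
    by (intro exI[of _ ?c] allI)
qed

lemma card_lists_length_less:
  assumes "finite A"
  shows "card {xs. set xs \<subseteq> A \<and> length xs < n} = (\<Sum>i<n. card A ^ i)"
proof (cases n)
  case (Suc m)
  then show ?thesis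
    using card_lists_length_le[OF assms, of m] by (simp add: less_Suc_eq_le lessThan_Suc_atMost)
qed simp

lemma card_shallow_vertices_le:
  assumes "is_catalan_tree d T"
  shows "card {v \<in> T. length v < p} \<le> (\<Sum>i<p. d ^ i)"
proof -
  have "{v \<in> T. length v < p} \<subseteq> {xs. set xs \<subseteq> {1..d} \<and> length xs < p}"
    using assms unfolding is_catalan_tree_def by blast
  moreover have "finite {xs. set xs \<subseteq> {1..d} \<and> length xs < p}"
    by (rule finite_subset[OF _ finite_lists_length_le[of "{1..d}" p]]) auto
  ultimately have "card {v \<in> T. length v < p} \<le> card {xs. set xs \<subseteq> {1..d} \<and> length xs < p}"
    by (rule card_mono[rotated])
  then show ?thesis by (simp add: card_lists_length_less)
qed

lemma abs_psi_minus_one: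
  assumes T: "T \<in> catalan_trees d k"
  shows "\<bar>psi d k p T - 1\<bar> = card {v \<in> T. length v < p} / real (d * k + 1)"
proof -
  let ?deep = "{v \<in> T. p \<le> length v}" and ?shallow = "{v \<in> T. length v < p}"
  have "finite T"
    using T by (simp add: catalan_trees_def is_catalan_tree_def)
  moreover have "T = ?deep \<union> ?shallow" "?deep \<inter> ?shallow = {}"
    by auto
  ultimately have "real (card ?deep) = real (d * k + 1) - card ?shallow"
    using card_catalan_trees[OF T] card_Un_disjoint[of ?deep ?shallow] by simp
  moreover have "real (d * k + 1) \<noteq> 0"
    by (simp only: of_nat_eq_0_iff)
  ultimately have "psi d k p T - 1 = - (card ?shallow / real (d * k + 1))"
    unfolding psi_eq_card_deep_vertices[OF T]
    by (simp add: diff_divide_distrib del: of_nat_add of_nat_mult)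
  then show ?thesis
    by simp
qed

theorem proposition6p1:
  fixes d p k :: nat
  assumes "d \<ge> 2" and "p \<ge> 1" and "k \<ge> 1"
  shows "(\<exists>c :: nat list set set \<Rightarrow> real.
            \<forall>T\<in>catalan_trees d k.
              psi d k p T = (\<Sum>S\<in>shuffle_classes d k p. c S * indicator S T))
       \<and> (\<forall>T\<in>catalan_trees d k.
            \<bar>psi d k p T - 1\<bar> \<le> ((real d ^ p - 1) / (real d - 1)) / real (d * k + 1))"
proof (intro conjI ballI)
  show "\<exists>c. \<forall>T\<in>catalan_trees d k. psi d k p T = (\<Sum>S\<in>shuffle_classes d k p. c S * indicator S T)"
    using psi_in_span_shuffle_classes by blast
next
  fix T assume T: "T \<in> catalan_trees d k"
  have "card {v \<in> T. length v < p} \<le> (\<Sum>i<p. d ^ i)"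
    using card_shallow_vertices_le T by (simp add: catalan_trees_def)
  then have "real (card {v \<in> T. length v < p}) \<le> (\<Sum>i<p. real d ^ i)"
    using of_nat_mono by fastforce
  also have "\<dots> = (real d ^ p - 1) / (real d - 1)"
    using assms(1) by (simp add: sum_gp_strict field_simps)
  finally show "\<bar>psi d k p T - 1\<bar> \<le> ((real d ^ p - 1) / (real d - 1)) / real (d * k + 1)"
    unfolding abs_psi_minus_one[OF T] by (rule divide_right_mono) simp
qed

end
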